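(* Let $n\ge 3$ be an integer, let $d_0,\dots,d_{n-1}>0$ (indices modulo $n$), and let $\lambda\in(\tfrac14,1)$. With $\alpha_j$, $\beta_i$ and the $n\times n$ matrix $Q_n$ defined as in the context, let $S_n$ be the $4n\times 4n$ matrix of the linear map $$(P_j^{0,0},P_j^{1,0},P_j^{0,1},P_j^{1,1})_{j=0}^{n-1}\mapsto(\overline P_j^{0,0},\overline P_j^{1,0},\overline P_j^{0,1},\overline P_j^{1,1})_{j=0}^{n-1}$$ given, for all $j$, by $$\overline P_j^{0,0}=\sum_{i=0}^{n-1}Q_{j,i}P_i^{0,0},$$ $$\overline P_j^{1,0}=\frac{3(2d_{j-1}+d_{j+1})P_j^{0,0}+3d_{j+1}P_{j-1}^{0,0}+(2d_{j-1}+d_{j+1})P_j^{1,0}+d_{j+1}P_{j-1}^{0,1}}{8(d_{j-1}+d_{j+1})},$$ $$\overline P_{j-1}^{0,1}=\frac{3d_{j-1}P_j^{0,0}+3(d_{j-1}+2d_{j+1})P_{j-1}^{0,0}+d_{j-1}P_j^{1,0}+(d_{j-1}+2d_{j+1})P_{j-1}^{0,1}}{8(d_{j-1}+d_{j+1})},$$ $$\overline P_j^{1,1}=\tfrac{9}{16}P_j^{0,0}+\tfrac{3}{16}P_j^{1,0}+\tfrac{3}{16}P_j^{0,1}+\tfrac{1}{16}P_j^{1,1}.$$ Then the eigenvalues of $S_n$ satisfy $\lambda_1=1>\lambda_2=\lambda_3=\lambda>|\lambda_k|$ for $k=4,5,\dots,4n$; that is, $1$ is a simple eigenvalue, $\lambda$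 is an eigenvalue of multiplicity two, and all other $4n-3$ eigenvalues (with multiplicity) have modulus less than $\lambda$.
   Context: Indices are modulo $n$. $\alpha_j=\frac{1}{n}\frac{d_{j-1}d_{j+2}}{(d_{j-1}+d_{j+1})(d_j+d_{j+2})}$, $\beta_i=\frac{d_{i-1}(d_{i-2}+d_{i+2})+d_{i+2}(d_{i-1}+d_{i+3})}{\sum_{k=0}^{n-1}(d_k+d_{k+2})(d_{k-1}+d_{k+3})}$, and $Q_n=(Q_{i,j})$ with $Q_{i,j}=(1-\lambda)\beta_j+2\lambda\alpha_i(1+2\cos\frac{2(j-i)\pi}{n})$ for $j\ne i$ and $Q_{i,i}=\lambda+(1-\lambda)\beta_i-2(n-3)\lambda\alpha_i$. The points $P_j^{a,b}$ are the control points in the two rings around the polygonal face (of valence $n$) in a tuned hybrid non-uniform subdivision mesh, and $S_n$ is the local subdivision matrix (after enough levels that neighboring knot intervals equal $d_j$); in the paper the unknowns are ordered as $P^{0,0}_0,\dots,P^{0,0}_{n-1}$, then the pairs $(P_j^{1,0},P_{j-1}^{0,1})$, then $P^{1,1}_0,\dots,P^{1,1}_{n-1}$, which gives a block lower-triangular matrix. *)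

theory Defs
  imports Complex_Main "Jordan_Normal_Form.Char_Poly"
begin

definition dm :: "(nat \<Rightarrow> real) \<Rightarrow> nat \<Rightarrow> int \<Rightarrow> real" where
  "dm d n j = d (nat (j mod int n))"

definition alpha :: "(nat \<Rightarrow> real) \<Rightarrow> nat \<Rightarrow> int \<Rightarrow> real" where
  "alpha d n j = (1 / real n) * (dm d n (j-1) * dm d n (j+2)) /
     ((dm d n (j-1) + dm d n (j+1)) * (dm d n j + dm d n (j+2)))"

definition beta :: "(nat \<Rightarrow> real) \<Rightarrow> nat \<Rightarrow> int \<Rightarrow> real" where
  "beta d n i = (dm d n (i-1) * (dm d n (i-2) + dm d n (i+2)) + dm d n (i+2) * (dm d n (i-1) + dm d n (i+3))) /
     (\<Sum>k<n. (dm d n (int k) + dm d n (int k + 2)) * (dm d n (int k - 1) + dm d n (int k + 3)))"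

definition Qn :: "(nat \<Rightarrow> real) \<Rightarrow> nat \<Rightarrow> real \<Rightarrow> nat \<Rightarrow> nat \<Rightarrow> real" where
  "Qn d n lam i j = (if i = j
     then lam + (1 - lam) * beta d n (int i) - 2 * (real n - 3) * lam * alpha d n (int i)
     else (1 - lam) * beta d n (int j)
          + 2 * lam * alpha d n (int i) * (1 + 2 * cos (2 * (real_of_int (int j - int i)) * pi / real n)))"

text \<open>Coordinates of a vector v in R^(4n): block t (0: P^{0,0}, 1: P^{1,0}, 2: P^{0,1}, 3: P^{1,1}),
  index j taken modulo n; i.e. P_j^{(t)} = v (t*n + (j mod n)).\<close>
definition comp :: "nat \<Rightarrow> (nat \<Rightarrow> real) \<Rightarrow> nat \<Rightarrow> int \<Rightarrow> real" where
  "comp n v t j = v (t * n + nat (j mod int n))"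

definition subdiv_map :: "(nat \<Rightarrow> real) \<Rightarrow> nat \<Rightarrow> real \<Rightarrow> (nat \<Rightarrow> real) \<Rightarrow> nat \<Rightarrow> real" where
  "subdiv_map d n lam v r =
    (let D = dm d n; P00 = comp n v 0; P10 = comp n v 1; P01 = comp n v 2; P11 = comp n v 3 in
     if r < n then
       (\<Sum>i<n. Qn d n lam r i * P00 (int i))
     else if r < 2*n then
       (let j = int (r - n) in
        (3 * (2 * D (j-1) + D (j+1)) * P00 j + 3 * D (j+1) * P00 (j-1)
         + (2 * D (j-1) + D (j+1)) * P10 j + D (j+1) * P01 (j-1)) / (8 * (D (j-1) + D (j+1))))
     else if r < 3*n then
       (let j = int (r - 2*n) + 1 in   \<comment> \<open>row r is the coordinate P^{0,1}_{j-1}\<close>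
        (3 * D (j-1) * P00 j + 3 * (D (j-1) + 2 * D (j+1)) * P00 (j-1)
         + D (j-1) * P10 j + (D (j-1) + 2 * D (j+1)) * P01 (j-1)) / (8 * (D (j-1) + D (j+1))))
     else
       (let j = int (r - 3*n) in
        9/16 * P00 j + 3/16 * P10 j + 3/16 * P01 j + 1/16 * P11 j))"

definition Sn :: "(nat \<Rightarrow> real) \<Rightarrow> nat \<Rightarrow> real \<Rightarrow> real mat" where
  "Sn d n lam = mat (4*n) (4*n) (\<lambda>(r, c). subdiv_map d n lam (\<lambda>k. if k = c then 1 else 0) r)"

end

theory Submission
  imports Defs
begin

text \<open>
  \<open>S\<^sub>n\<close> is block lower triangular: the new points P^{0,0} depend only on the old ones, through
  \<open>Q\<^sub>n\<close>, so \<open>char S\<^sub>n = char Q\<^sub>n * char R\<close> for the block \<open>R\<close> acting on the other \<open>3n\<close> points.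
  In \<open>R\<close> each pair (P^{1,0}_{i+1}, P^{0,1}_i) interacts only with itself, through a 2x2 block with
  eigenvalues 1/4 and 1/8, and the P^{1,1} do not feed back into the others and are scaled by 1/16;
  so every eigenvalue of \<open>R\<close> is smaller than \<open>\<lambda>\<close>.

  For \<open>Q\<^sub>n\<close> let \<open>\<zeta>\<^sub>j = \<omega>\<^sup>j\<close> with \<open>\<omega> = e\<^sup>2\<^sup>\<pi>\<^sup>i\<^sup>/\<^sup>n\<close>. Then
  \<open>Q\<^sub>n = \<lambda> I + (1 - \<lambda>) 1 \<beta>\<^sup>T - 2 \<lambda> diag \<alpha> \<Pi>\<close>, where \<open>\<Pi> = n I - (1 + 2 cos (2\<pi>(j - i)/n))\<^sub>i\<^sub>j\<close>
  is \<open>n\<close> times the orthogonal projection onto the complement of \<open>W = span {1, \<zeta>, cnj \<circ> \<zeta>}\<close>.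
  \<open>Q\<^sub>n\<close> fixes 1 and maps \<open>\<zeta>\<close>, \<open>cnj \<circ> \<zeta>\<close> to \<open>\<lambda> \<zeta>\<close>, \<open>\<lambda> (cnj \<circ> \<zeta>)\<close> modulo 1, which gives the
  eigenvalues \<open>1, \<lambda>, \<lambda>\<close> on \<open>W\<close>. Every other eigenvalue \<open>\<mu>\<close> belongs to the map induced on
  \<open>\<complex>\<^sup>n / W\<close>; for an eigenvector \<open>v\<close> of it, \<open>Y = \<Pi> v \<noteq> 0\<close> satisfies \<open>\<mu> Y = \<lambda> Y - 2 \<lambda> \<Pi> (\<alpha> Y)\<close>,
  and pairing with \<open>Y\<close> gives \<open>\<mu> = \<lambda> (1 - 2 n \<Sum>\<alpha>\<^sub>i |Y\<^sub>i|\<^sup>2 / \<Sum>|Y\<^sub>i|\<^sup>2)\<close>, which lies in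
  \<open>(-\<lambda>, \<lambda>)\<close> because \<open>0 < n \<alpha>\<^sub>i < 1\<close>.
\<close>

lemma char_poly_four_block_mat_lower_left_zero:
  fixes A :: "'a :: idom mat"
  assumes A: "A \<in> carrier_mat k k" and B: "B \<in> carrier_mat k m" and D: "D \<in> carrier_mat m m"
  shows "char_poly (four_block_mat A B (0\<^sub>m m k) D) = char_poly A * char_poly D"
proof -
  let ?cm = "\<lambda>A. [:0, 1:] \<cdot>\<^sub>m 1\<^sub>m (dim_row A) + map_mat (\<lambda>a. [:- a:]) A"
  have "char_poly (four_block_mat A B (0\<^sub>m m k) D) = det (?cm (four_block_mat A B (0\<^sub>m m k) D))"
    unfolding char_poly_defs ..
  also have "?cm (four_block_mat A B (0\<^sub>m m k) D)
           = four_block_mat (?cm A) (map_mat (\<lambda>a. [:- a:]) B) (0\<^sub>m m k) (?cm D)"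
    using A B D by (auto intro!: eq_matI simp: one_poly_def)
  also have "det \<dots> = det (?cm A) * det (?cm D)"
    using A B D by (intro det_four_block_mat_lower_left_zero[of _ k _ m]) auto
  finally show ?thesis unfolding char_poly_defs .
qed

lemma char_poly_four_block_mat_upper_right_zero:
  fixes A :: "'a :: idom mat"
  assumes A: "A \<in> carrier_mat k k" and C: "C \<in> carrier_mat m k" and D: "D \<in> carrier_mat m m"
  shows "char_poly (four_block_mat A (0\<^sub>m k m) C D) = char_poly A * char_poly D"
proof -
  have "char_poly (four_block_mat A (0\<^sub>m k m) C D)
      = char_poly (transpose_mat (four_block_mat A (0\<^sub>m k m) C D))"
    using A D by (simp add: char_poly_transpose_mat[of _ "k + m"])
  also have "\<dots> = char_poly (four_block_mat (transpose_mat A) (transpose_mat C) (0\<^sub>m m k) (transpose_mat D))"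
    using A C D by (simp add: transpose_four_block_mat[OF A zero_carrier_mat C D])
  also have "\<dots> = char_poly A * char_poly D"
    using A C D by (simp add: char_poly_four_block_mat_lower_left_zero[of _ k])
  finally show ?thesis .
qed

lemma vandermonde3_eq_0:
  fixes x y z a b c :: "'a :: field"
  assumes "x \<noteq> y" "x \<noteq> z" "y \<noteq> z"
    and "a + b + c = 0" "a * x + b * y + c * z = 0" "a * x\<^sup>2 + b * y\<^sup>2 + c * z\<^sup>2 = 0"
  shows "a = 0 \<and> b = 0 \<and> c = 0"
proof -
  have "b * (y - x) + c * (z - x) = (a * x + b * y + c * z) - x * (a + b + c)"
    by (simp add: algebra_simps)
  hence 1: "b * (y - x) + c * (z - x) = 0" using assms(4,5) by simp
  have "b * y * (y - x) + c * z * (z - x) = (a * x\<^sup>2 + b * y\<^sup>2 + c * z\<^sup>2) - x * (a * x + b * y + c * z)"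
    by (simp add: algebra_simps power2_eq_square)
  hence 2: "b * y * (y - x) + c * z * (z - x) = 0" using assms(5,6) by simp
  have "c * (z - x) * (z - y) = (b * y * (y - x) + c * z * (z - x)) - y * (b * (y - x) + c * (z - x))"
    by (simp add: algebra_simps)
  hence "c = 0" using 1 2 assms(2,3) by simp
  with 1 assms(1) have "b = 0" by simp
  with \<open>c = 0\<close> assms(4) show ?thesis by simp
qed

lemma sum_shift_mod:
  fixes F :: "int \<Rightarrow> 'a :: comm_monoid_add"
  assumes "n > 0" and periodic: "\<And>j. F (j mod int n) = F j"
  shows "(\<Sum>k<n. F (int k + s)) = (\<Sum>k<n. F (int k))"
proof (rule sum.reindex_bij_witness[where i = "\<lambda>m. nat ((int m - s) mod int n)"
                                      and j = "\<lambda>k. nat ((int k + s) mod int n)"])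
  fix k assume "k \<in> {..<n}"
  thus "nat ((int (nat ((int k + s) mod int n)) - s) mod int n) = k"
    using \<open>n > 0\<close> by (simp add: mod_diff_left_eq)
  show "nat ((int k + s) mod int n) \<in> {..<n}" using \<open>n > 0\<close> by (simp add: nat_less_iff)
  show "F (int (nat ((int k + s) mod int n))) = F (int k + s)" using \<open>n > 0\<close> periodic by simp
next
  fix m assume "m \<in> {..<n}"
  thus "nat ((int (nat ((int m - s) mod int n)) + s) mod int n) = m"
    using \<open>n > 0\<close> by (simp add: mod_add_left_eq)
  show "nat ((int m - s) mod int n) \<in> {..<n}" using \<open>n > 0\<close> by (simp add: nat_less_iff)
qed

lemma order_of_factored_poly:
  fixes a b :: "'a :: idom"
  assumes "a \<noteq> b" "poly q a \<noteq> 0" "poly q b \<noteq> 0"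
  shows "order a ([:- a, 1:] * [:- b, 1:] ^ 2 * q) = 1"
    and "order b ([:- a, 1:] * [:- b, 1:] ^ 2 * q) = 2"
proof -
  have "q \<noteq> 0" using assms(2) by auto
  hence nz: "[:- a, 1:] * [:- b, 1:] ^ 2 * q \<noteq> 0" "[:- a, 1:] * [:- b, 1:] ^ 2 \<noteq> 0"
    by (intro no_zero_divisors power_not_zero; simp)+
  have no_root: "order c p = 0" if "poly p c \<noteq> 0" for c and p :: "'a poly"
    using that order_root by blast
  have "order a [:- a, 1:] = 1" using order_power_n_n[of a 1] by simp
  moreover have "order a ([:- b, 1:] ^ 2) = 0" using assms(1) by (intro no_root) auto
  ultimately show "order a ([:- a, 1:] * [:- b, 1:] ^ 2 * q) = 1"
    unfolding order_mult[OF nz(1)] order_mult[OF nz(2)] no_root[OF assms(2)] by simp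
  have "order b [:- a, 1:] = 0" using assms(1) by (intro no_root) auto
  moreover have "order b ([:- b, 1:] ^ 2) = 2" by (rule order_power_n_n)
  ultimately show "order b ([:- a, 1:] * [:- b, 1:] ^ 2 * q) = 2"
    unfolding order_mult[OF nz(1)] order_mult[OF nz(2)] no_root[OF assms(3)] by simp
qed

lemma adj_mat_inverse:
  fixes A :: "'a :: field mat"
  assumes A: "A \<in> carrier_mat n n" and "det A \<noteq> 0"
  shows "(1 / det A) \<cdot>\<^sub>m adj_mat A \<in> carrier_mat n n"
    and "A * ((1 / det A) \<cdot>\<^sub>m adj_mat A) = 1\<^sub>m n"
    and "((1 / det A) \<cdot>\<^sub>m adj_mat A) * A = 1\<^sub>m n"
proof -
  have "(1 / det A) \<cdot>\<^sub>m (det A \<cdot>\<^sub>m 1\<^sub>m n) = 1\<^sub>m n"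
    using \<open>det A \<noteq> 0\<close> by (intro eq_matI) auto
  with adj_mat[OF A] A
  show "(1 / det A) \<cdot>\<^sub>m adj_mat A \<in> carrier_mat n n"
    and "A * ((1 / det A) \<cdot>\<^sub>m adj_mat A) = 1\<^sub>m n"
    and "((1 / det A) \<cdot>\<^sub>m adj_mat A) * A = 1\<^sub>m n"
    by (simp_all add: mult_smult_distrib[of _ n n _ n] mult_smult_assoc_mat[of _ n n _ n])
qed

lemma sum_powers_root_of_unity:
  fixes z :: "'a :: field"
  assumes "z ^ n = 1" "z \<noteq> 1"
  shows "(\<Sum>j<n. z ^ j) = 0"
  using geometric_sum[OF assms(2), of n] assms(1) by simp

lemma edge_pair_eigenvector_eq_0:
  fixes p q \<mu> :: complex and a b :: real
  assumes "a > 0" "b > 0"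
    and ev1: "\<mu> * p = (of_real (2 * a + b) * p + of_real b * q) / of_real (8 * (a + b))"
    and ev2: "\<mu> * q = (of_real a * p + of_real (a + 2 * b) * q) / of_real (8 * (a + b))"
    and "\<mu> \<noteq> 1/4" "\<mu> \<noteq> 1/8"
  shows "p = 0 \<and> q = 0"
proof -
  define t where "t = \<mu> * of_real (8 * (a + b))"
  have "8 * (a + b) \<noteq> 0" "a + b \<noteq> 0" using assms(1,2) by simp_all
  hence ab: "complex_of_real (8 * (a + b)) \<noteq> 0" "complex_of_real (a + b) \<noteq> 0"
    by (simp_all only: of_real_eq_0_iff not_False_eq_True)
  have e1: "(t - of_real (2 * a + b)) * p = of_real b * q"
    using ev1 ab unfolding t_def by (simp add: field_simps)
  have e2: "(t - of_real (a + 2 * b)) * q = of_real a * p"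
    using ev2 ab unfolding t_def by (simp add: field_simps)
  have "((t - of_real (2 * a + b)) * (t - of_real (a + 2 * b)) - of_real (a * b)) * p
      = (t - of_real (a + 2 * b)) * ((t - of_real (2 * a + b)) * p) - of_real b * (of_real a * p)"
    by (simp add: algebra_simps)
  also have "\<dots> = 0" unfolding e1 e2[symmetric] by (simp add: algebra_simps)
  also have "(t - of_real (2 * a + b)) * (t - of_real (a + 2 * b)) - of_real (a * b)
           = 2 * (of_real (a + b))\<^sup>2 * ((8 * \<mu> - 1) * (4 * \<mu> - 1))"
    unfolding t_def by (simp add: algebra_simps power2_eq_square)
  finally have "2 * (complex_of_real (a + b))\<^sup>2 * ((8 * \<mu> - 1) * (4 * \<mu> - 1)) * p = 0" .
  moreover have "8 * \<mu> - 1 \<noteq> 0" "4 * \<mu> - 1 \<noteq> 0"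
    using assms(5,6) by (auto simp: field_simps)
  ultimately have "p = 0" using ab(2) by simp
  with e1 assms(2) show ?thesis by simp
qed

locale tuned_subdivision =
  fixes n :: nat and d :: "nat \<Rightarrow> real" and lam :: real
  assumes n_ge_3: "n \<ge> 3" and d_pos: "\<And>j. j < n \<Longrightarrow> d j > 0"
    and lam_gt: "1/4 < lam" and lam_lt_1: "lam < 1"
begin

abbreviation D :: "int \<Rightarrow> real" where "D \<equiv> dm d n"

lemma n_pos: "n > 0"
  using n_ge_3 by simp

lemma dm_pos: "D j > 0"
proof -
  have "nat (j mod int n) < n" using n_pos by (simp add: nat_less_iff)
  thus ?thesis unfolding dm_def using d_pos by simp
qed

lemma dm_mod: "D (j mod int n) = D j"
  unfolding dm_def by simp

lemma alpha_pos: "alpha d n j > 0"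
  unfolding alpha_def using dm_pos n_pos by (simp add: add_pos_pos)

lemma n_alpha_lt_1: "real n * alpha d n j < 1"
proof -
  have "D (j - 1) * D (j + 2)
      < (D (j - 1) + D (j + 1)) * (D j + D (j + 2))"
    using dm_pos by (simp add: algebra_simps add_pos_pos)
  thus ?thesis unfolding alpha_def using n_pos dm_pos by (simp add: add_pos_pos)
qed

lemma sum_beta: "(\<Sum>i<n. beta d n (int i)) = 1"
proof -
  have shift: "(\<Sum>k<n. D (int k + s + p) * D (int k + s + q)) = (\<Sum>k<n. D (int k + p) * D (int k + q))"
    for s p q
    using sum_shift_mod[OF n_pos, of "\<lambda>j. D (j + p) * D (j + q)" s]
    by (simp add: add.assoc) (metis dm_mod mod_add_left_eq)
  define den where "den = (\<Sum>k<n. (D (int k) + D (int k + 2)) * (D (int k - 1) + D (int k + 3)))"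
  have "den > 0"
    unfolding den_def using n_pos dm_pos by (intro sum_pos) (auto intro!: mult_pos_pos add_pos_pos)
  have "(\<Sum>i<n. D (int i - 1) * D (int i - 2)) = (\<Sum>k<n. D (int k) * D (int k - 1))"
       "(\<Sum>i<n. D (int i - 1) * D (int i + 2)) = (\<Sum>k<n. D (int k) * D (int k + 3))"
    using shift[of "-1" 0 "-1"] shift[of "-1" 0 3] by (simp_all add: algebra_simps)
  hence "(\<Sum>i<n. D (int i - 1) * (D (int i - 2) + D (int i + 2))
                 + D (int i + 2) * (D (int i - 1) + D (int i + 3))) = den"
    unfolding den_def by (simp add: algebra_simps sum.distrib sum_distrib_left[symmetric])
  thus ?thesis
    unfolding beta_def sum_divide_distrib[symmetric] using \<open>den > 0\<close> by (simp add: den_def)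
qed

definition \<omega> :: complex where "\<omega> = cis (2 * pi / real n)"
definition \<zeta> :: "nat \<Rightarrow> complex" where "\<zeta> j = \<omega> ^ j"

lemma Im_omega_pos: "Im \<omega> > 0"
proof -
  have "2 * pi < pi * real n" using n_ge_3 pi_gt_zero by simp
  hence "2 * pi / real n < pi" using n_pos by (simp add: divide_less_eq)
  thus ?thesis unfolding \<omega>_def using n_pos by (simp add: sin_gt_zero)
qed

lemma omega_ne: "\<omega> \<noteq> 1" "cnj \<omega> \<noteq> 1" "\<omega> \<noteq> cnj \<omega>" "\<omega>\<^sup>2 \<noteq> 1"
proof -
  show "\<omega> \<noteq> 1" "cnj \<omega> \<noteq> 1" "\<omega> \<noteq> cnj \<omega>"
    using Im_omega_pos by (auto simp: complex_eq_iff)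
  have "\<omega>\<^sup>2 - 1 = (\<omega> - 1) * (\<omega> + 1)" by (simp add: algebra_simps power2_eq_square)
  moreover have "\<omega> + 1 \<noteq> 0" using Im_omega_pos by (auto simp: complex_eq_iff)
  ultimately show "\<omega>\<^sup>2 \<noteq> 1" using \<open>\<omega> \<noteq> 1\<close> by auto
qed

lemma omega_pow_n: "\<omega> ^ n = 1"
  unfolding \<omega>_def DeMoivre using n_pos by simp

lemma zeta_mult_cnj: "\<zeta> j * cnj (\<zeta> j) = 1"
  unfolding \<zeta>_def \<omega>_def by (simp add: DeMoivre cis_cnj cis_mult)

lemma zeta_span_eq_0:
  assumes "\<And>i. i < 3 \<Longrightarrow> x + y * \<zeta> i + z * cnj (\<zeta> i) = 0"
  shows "x = 0 \<and> y = 0 \<and> z = 0"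
  using assms[of 0] assms[of 1] assms[of 2] omega_ne
  by (intro vandermonde3_eq_0[of 1 \<omega> "cnj \<omega>"]) (auto simp: \<zeta>_def mult.commute)

definition pairing :: "(nat \<Rightarrow> complex) \<Rightarrow> (nat \<Rightarrow> complex) \<Rightarrow> complex" where
  "pairing g f = (\<Sum>j<n. g j * f j)"

lemma pairing_zeta:
  "pairing (\<lambda>_. 1) (\<lambda>_. 1) = of_nat n" "pairing (\<lambda>_. 1) \<zeta> = 0" "pairing (\<lambda>_. 1) (\<lambda>j. cnj (\<zeta> j)) = 0"
  "pairing \<zeta> (\<lambda>_. 1) = 0" "pairing \<zeta> \<zeta> = 0" "pairing \<zeta> (\<lambda>j. cnj (\<zeta> j)) = of_nat n"
  "pairing (\<lambda>j. cnj (\<zeta> j)) (\<lambda>_. 1) = 0" "pairing (\<lambda>j. cnj (\<zeta> j)) \<zeta> = of_nat n"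
  "pairing (\<lambda>j. cnj (\<zeta> j)) (\<lambda>j. cnj (\<zeta> j)) = 0"
proof -
  have sum1: "(\<Sum>j<n. \<zeta> j) = 0"
    unfolding \<zeta>_def by (rule sum_powers_root_of_unity[OF omega_pow_n omega_ne(1)])
  have "(\<omega>\<^sup>2) ^ n = 1" using omega_pow_n by (metis power_mult_distrib power_one power2_eq_square)
  hence sum2: "(\<Sum>j<n. \<zeta> j * \<zeta> j) = 0"
    using sum_powers_root_of_unity[OF _ omega_ne(4)]
    unfolding \<zeta>_def by (simp add: power_mult[symmetric] power2_eq_square power_mult_distrib[symmetric])
  have "(\<Sum>j<n. cnj (\<zeta> j)) = 0" "(\<Sum>j<n. cnj (\<zeta> j) * cnj (\<zeta> j)) = 0"
    using arg_cong[OF sum1, of cnj] arg_cong[OF sum2, of cnj] by simp_all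
  thus "pairing (\<lambda>_. 1) (\<lambda>_. 1) = of_nat n" "pairing (\<lambda>_. 1) \<zeta> = 0"
    "pairing (\<lambda>_. 1) (\<lambda>j. cnj (\<zeta> j)) = 0" "pairing \<zeta> (\<lambda>_. 1) = 0" "pairing \<zeta> \<zeta> = 0"
    "pairing \<zeta> (\<lambda>j. cnj (\<zeta> j)) = of_nat n" "pairing (\<lambda>j. cnj (\<zeta> j)) (\<lambda>_. 1) = 0"
    "pairing (\<lambda>j. cnj (\<zeta> j)) \<zeta> = of_nat n" "pairing (\<lambda>j. cnj (\<zeta> j)) (\<lambda>j. cnj (\<zeta> j)) = 0"
    unfolding pairing_def using sum1 sum2 zeta_mult_cnj by (simp_all add: mult.commute)
qed

lemma pairing_linear:
  "pairing g (\<lambda>j. f j + h j) = pairing g f + pairing g h"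
  "pairing g (\<lambda>j. f j - h j) = pairing g f - pairing g h"
  "pairing g (\<lambda>j. c * f j) = c * pairing g f"
  unfolding pairing_def by (simp_all add: sum.distrib sum_subtractf sum_distrib_left algebra_simps)

lemma pairing_span:
  "pairing g (\<lambda>j. x + y * \<zeta> j + z * cnj (\<zeta> j))
     = x * pairing g (\<lambda>_. 1) + y * pairing g \<zeta> + z * pairing g (\<lambda>j. cnj (\<zeta> j))"
  unfolding pairing_def by (simp add: sum.distrib sum_distrib_left algebra_simps)

text \<open>\<open>proj f\<close> is \<open>n\<close> times the orthogonal projection of \<open>f\<close> onto the span of \<open>1\<close>, \<open>\<zeta>\<close>, \<open>cnj \<circ> \<zeta>\<close>,
  and \<open>perp f\<close> is \<open>n\<close> times its projection onto the orthogonal complement.\<close>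
definition proj :: "(nat \<Rightarrow> complex) \<Rightarrow> nat \<Rightarrow> complex" where
  "proj f i = pairing (\<lambda>_. 1) f + cnj (\<zeta> i) * pairing \<zeta> f + \<zeta> i * pairing (\<lambda>j. cnj (\<zeta> j)) f"

definition perp :: "(nat \<Rightarrow> complex) \<Rightarrow> nat \<Rightarrow> complex" where
  "perp f i = of_nat n * f i - proj f i"

lemma of_real_cos_eq_zeta:
  "complex_of_real (1 + 2 * cos (2 * real_of_int (int j - int i) * pi / real n))
     = 1 + \<zeta> j * cnj (\<zeta> i) + cnj (\<zeta> j) * \<zeta> i"
proof -
  define t where "t = (real j - real i) * (2 * pi / real n)"
  have "\<zeta> j * cnj (\<zeta> i) = cis t" "cnj (\<zeta> j) * \<zeta> i = cis (- t)"
    unfolding \<zeta>_def \<omega>_def t_def DeMoivre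
    by (simp_all add: cis_cnj cis_mult algebra_simps diff_divide_distrib)
  moreover have "2 * real_of_int (int j - int i) * pi / real n = t" unfolding t_def by simp
  ultimately show ?thesis by (simp add: complex_eq_iff)
qed

lemma proj_eq_sum_cos:
  "proj f i = (\<Sum>j<n. complex_of_real (1 + 2 * cos (2 * real_of_int (int j - int i) * pi / real n)) * f j)"
  unfolding of_real_cos_eq_zeta proj_def pairing_def
  by (simp add: algebra_simps sum.distrib sum_distrib_left)

lemma proj_span: "proj (\<lambda>j. x + y * \<zeta> j + z * cnj (\<zeta> j)) i = of_nat n * (x + y * \<zeta> i + z * cnj (\<zeta> i))"
  unfolding proj_def pairing_span pairing_zeta by (simp add: algebra_simps)

lemma perp_span: "perp (\<lambda>j. x + y * \<zeta> j + z * cnj (\<zeta> j)) i = 0"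
  unfolding perp_def proj_span by simp

lemma perp_linear:
  "perp (\<lambda>j. f j + h j) i = perp f i + perp h i"
  "perp (\<lambda>j. f j - h j) i = perp f i - perp h i"
  "perp (\<lambda>j. c * f j) i = c * perp f i"
  unfolding perp_def proj_def pairing_linear by (simp_all add: algebra_simps)

lemma perp_cong: "(\<And>j. j < n \<Longrightarrow> f j = h j) \<Longrightarrow> i < n \<Longrightarrow> perp f i = perp h i"
  unfolding perp_def proj_def pairing_def by simp

lemma pairing_perp: "pairing g (perp f) = 0"
  if "g = (\<lambda>_. 1) \<or> g = \<zeta> \<or> g = (\<lambda>j. cnj (\<zeta> j))"
proof -
  have "proj f = (\<lambda>j. pairing (\<lambda>_. 1) f + pairing (\<lambda>j. cnj (\<zeta> j)) f * \<zeta> j + pairing \<zeta> f * cnj (\<zeta> j))"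
    unfolding proj_def by (auto simp: algebra_simps)
  hence "pairing g (proj f) = of_nat n * pairing g f"
    using that by (elim disjE) (simp_all add: pairing_span pairing_zeta)
  thus ?thesis unfolding perp_def[abs_def] pairing_linear by simp
qed

lemma orthogonal_perp_proj: "(\<Sum>i<n. cnj (perp f i) * proj h i) = 0"
proof -
  have "(\<Sum>i<n. cnj (perp f i) * proj h i)
      = pairing (\<lambda>_. 1) h * cnj (pairing (\<lambda>_. 1) (perp f)) + pairing \<zeta> h * cnj (pairing \<zeta> (perp f))
        + pairing (\<lambda>j. cnj (\<zeta> j)) h * cnj (pairing (\<lambda>j. cnj (\<zeta> j)) (perp f))"
    unfolding proj_def pairing_def[of _ "perp f"]
    by (simp add: sum.distrib sum_distrib_left algebra_simps)
  thus ?thesis by (simp add: pairing_perp)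
qed

abbreviation alpha_c :: "nat \<Rightarrow> complex" where "alpha_c i \<equiv> complex_of_real (alpha d n (int i))"
abbreviation beta_c :: "nat \<Rightarrow> complex" where "beta_c i \<equiv> complex_of_real (beta d n (int i))"

lemma Qn_mult:
  fixes v :: "nat \<Rightarrow> complex"
  assumes "i < n"
  shows "(\<Sum>j<n. complex_of_real (Qn d n lam i j) * v j)
       = lam * v i + (1 - lam) * pairing beta_c v - 2 * lam * alpha_c i * perp v i"
proof -
  have Q_entry: "complex_of_real (Qn d n lam i j)
      = (if i = j then lam - 2 * lam * alpha_c i * of_nat n else 0) + (1 - lam) * beta_c j
        + 2 * lam * alpha_c i * complex_of_real (1 + 2 * cos (2 * real_of_int (int j - int i) * pi / real n))"
    for j
    unfolding Qn_def by (auto simp: algebra_simps)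
  have "(\<Sum>j<n. complex_of_real (Qn d n lam i j) * v j)
      = (\<Sum>j<n. (if i = j then (lam - 2 * lam * alpha_c i * of_nat n) * v j else 0)
                + (1 - lam) * (beta_c j * v j)
                + 2 * lam * alpha_c i * (complex_of_real (1 + 2 * cos (2 * real_of_int (int j - int i) * pi / real n)) * v j))"
    unfolding Q_entry by (intro sum.cong) (auto simp: algebra_simps)
  also have "\<dots> = (lam - 2 * lam * alpha_c i * of_nat n) * v i + (1 - lam) * pairing beta_c v
                  + 2 * lam * alpha_c i * proj v i"
    using assms by (simp add: sum.distrib sum_distrib_left[symmetric] pairing_def proj_eq_sum_cos)
  finally show ?thesis unfolding perp_def by (simp add: algebra_simps)
qed

lemma Qn_mult_const:
  assumes "i < n"
  shows "(\<Sum>j<n. complex_of_real (Qn d n lam i j) * 1) = 1"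
proof -
  have "pairing beta_c (\<lambda>_. 1) = 1"
    unfolding pairing_def using sum_beta by (simp flip: of_real_sum)
  moreover have "perp (\<lambda>_. 1) i = 0" using perp_span[of 1 0 0 i] by simp
  ultimately show ?thesis using Qn_mult[OF assms, of "\<lambda>_. 1"] by (simp add: algebra_simps)
qed

lemma Qn_mult_zeta:
  "i < n \<Longrightarrow> (\<Sum>j<n. complex_of_real (Qn d n lam i j) * \<zeta> j) = lam * \<zeta> i + (1 - lam) * pairing beta_c \<zeta>"
  using perp_span[of 0 1 0 i] by (simp add: Qn_mult)

lemma Qn_mult_cnj_zeta:
  "i < n \<Longrightarrow> (\<Sum>j<n. complex_of_real (Qn d n lam i j) * cnj (\<zeta> j))
           = lam * cnj (\<zeta> i) + (1 - lam) * pairing beta_c (\<lambda>j. cnj (\<zeta> j))"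
  using perp_span[of 0 0 1 i] by (simp add: Qn_mult)

text \<open>Applying \<open>perp\<close> to an eigenvalue equation of \<open>Q\<^sub>n\<close> modulo the span of \<open>1\<close>, \<open>\<zeta>\<close>, \<open>cnj \<circ> \<zeta>\<close>
  removes both the rank-one term \<open>(1 - \<lambda>) 1 \<beta>\<^sup>T\<close> and the span.\<close>
lemma perp_eigen_equation:
  fixes v :: "nat \<Rightarrow> complex"
  assumes ev: "\<And>i. i < n \<Longrightarrow> (\<Sum>j<n. complex_of_real (Qn d n lam i j) * v j)
                                = \<mu> * v i + (x + y * \<zeta> i + z * cnj (\<zeta> i))"
    and "i < n"
  shows "\<mu> * perp v i = lam * perp v i - 2 * lam * perp (\<lambda>j. alpha_c j * perp v j) i"
proof -
  define s where "s = (\<lambda>j. ((1 - lam) * pairing beta_c v - x) + (- y) * \<zeta> j + (- z) * cnj (\<zeta> j))"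
  have "\<mu> * v j = lam * v j - 2 * lam * (alpha_c j * perp v j) + s j" if "j < n" for j
    using ev[OF that] unfolding Qn_mult[OF that] s_def by (simp add: algebra_simps)
  hence "perp (\<lambda>j. \<mu> * v j) i = perp (\<lambda>j. lam * v j - 2 * lam * (alpha_c j * perp v j) + s j) i"
    using \<open>i < n\<close> by (intro perp_cong) auto
  moreover have "perp s i = 0" unfolding s_def by (rule perp_span)
  ultimately show ?thesis by (simp only: perp_linear) simp
qed

lemma perp_nonzero:
  fixes v :: "nat \<Rightarrow> complex"
  assumes "v 0 = 0" "v 1 = 0" "v 2 = 0" and "k < n" "v k \<noteq> 0"
  obtains i where "i < n" "perp v i \<noteq> 0"
proof -
  have "\<exists>i<n. perp v i \<noteq> 0"
  proof (rule ccontr)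
    assume "\<not> (\<exists>i<n. perp v i \<noteq> 0)"
    hence proj_v: "proj v i = of_nat n * v i" if "i < n" for i
      using that unfolding perp_def by auto
    have "pairing (\<lambda>_. 1) v + pairing (\<lambda>j. cnj (\<zeta> j)) v * \<zeta> i + pairing \<zeta> v * cnj (\<zeta> i) = 0"
      if "i < 3" for i
    proof -
      have "i = 0 \<or> i = 1 \<or> i = 2" using that by auto
      thus ?thesis using proj_v[of i] n_ge_3 assms(1-3) unfolding proj_def by (auto simp: algebra_simps)
    qed
    hence "pairing (\<lambda>_. 1) v = 0 \<and> pairing (\<lambda>j. cnj (\<zeta> j)) v = 0 \<and> pairing \<zeta> v = 0"
      by (rule zeta_span_eq_0)
    hence "proj v k = 0" unfolding proj_def by simp
    thus False using proj_v[OF \<open>k < n\<close>] assms(5) n_pos by simp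
  qed
  thus ?thesis using that by blast
qed

lemma n_alpha_weighted_sum_bounds:
  fixes Y :: "nat \<Rightarrow> complex"
  assumes "i0 < n" "Y i0 \<noteq> 0"
  shows "0 < real n * (\<Sum>i<n. alpha d n (int i) * (cmod (Y i))\<^sup>2)"
    and "real n * (\<Sum>i<n. alpha d n (int i) * (cmod (Y i))\<^sup>2) < (\<Sum>i<n. (cmod (Y i))\<^sup>2)"
proof -
  show "0 < real n * (\<Sum>i<n. alpha d n (int i) * (cmod (Y i))\<^sup>2)"
    using n_pos assms alpha_pos by (intro mult_pos_pos sum_pos2[of _ i0]) (auto simp: less_imp_le)
  show "real n * (\<Sum>i<n. alpha d n (int i) * (cmod (Y i))\<^sup>2) < (\<Sum>i<n. (cmod (Y i))\<^sup>2)"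
    unfolding sum_distrib_left
  proof (rule sum_strict_mono_ex1)
    show "\<forall>i\<in>{..<n}. real n * (alpha d n (int i) * (cmod (Y i))\<^sup>2) \<le> (cmod (Y i))\<^sup>2"
      using n_alpha_lt_1 alpha_pos
      by (auto intro!: mult_left_le_one_le simp: mult.assoc[symmetric] less_imp_le)
    show "\<exists>i\<in>{..<n}. real n * (alpha d n (int i) * (cmod (Y i))\<^sup>2) < (cmod (Y i))\<^sup>2"
      using assms n_alpha_lt_1[of "int i0"] by (intro bexI[of _ i0]) (auto simp: mult.assoc[symmetric])
  qed simp
qed

text \<open>Pairing the projected equation with \<open>Y = perp v\<close>: since \<open>perp\<close> is \<open>n\<close> times an orthogonal
  projection, the term \<open>perp (\<alpha> Y)\<close> contributes \<open>n \<Sum>\<alpha>\<^sub>i |Y\<^sub>i|\<^sup>2\<close>.\<close>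
lemma perp_rayleigh_identity:
  fixes v :: "nat \<Rightarrow> complex"
  assumes "\<And>i. i < n \<Longrightarrow> \<mu> * perp v i = lam * perp v i - 2 * lam * perp (\<lambda>j. alpha_c j * perp v j) i"
  shows "\<mu> * of_real (\<Sum>i<n. (cmod (perp v i))\<^sup>2)
       = of_real (lam * (\<Sum>i<n. (cmod (perp v i))\<^sup>2)
                  - 2 * lam * real n * (\<Sum>i<n. alpha d n (int i) * (cmod (perp v i))\<^sup>2))"
proof -
  define Y where "Y = perp v"
  have Y_eq: "\<mu> * Y i = lam * Y i - 2 * lam * (of_nat n * (alpha_c i * Y i) - proj (\<lambda>j. alpha_c j * Y j) i)"
    if "i < n" for i
    using assms[OF that, folded Y_def] unfolding perp_def[of "\<lambda>j. alpha_c j * Y j"] by simp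
  have sq: "cnj (Y i) * Y i = complex_of_real ((cmod (Y i))\<^sup>2)" for i
    using complex_norm_square[of "Y i"] by (simp add: mult.commute del: of_real_power)
  have "\<mu> * of_real (\<Sum>i<n. (cmod (Y i))\<^sup>2) = (\<Sum>i<n. cnj (Y i) * (\<mu> * Y i))"
    unfolding of_real_sum sq[symmetric] by (simp add: sum_distrib_left algebra_simps)
  also have "\<dots> = (\<Sum>i<n. lam * (cnj (Y i) * Y i) - 2 * lam * of_nat n * (alpha_c i * (cnj (Y i) * Y i))
                + 2 * lam * (cnj (Y i) * proj (\<lambda>j. alpha_c j * Y j) i))"
    by (intro sum.cong refl, subst Y_eq) (auto simp: algebra_simps)
  also have "\<dots> = of_real (lam * (\<Sum>i<n. (cmod (Y i))\<^sup>2)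
                  - 2 * lam * real n * (\<Sum>i<n. alpha d n (int i) * (cmod (Y i))\<^sup>2))"
    unfolding sum.distrib sum_subtractf sum_distrib_left[symmetric] Y_def orthogonal_perp_proj
    unfolding Y_def[symmetric] sq by (simp add: sum_distrib_left)
  finally show ?thesis unfolding Y_def .
qed

lemma eigenvalue_modulo_span_bound:
  fixes v :: "nat \<Rightarrow> complex"
  assumes ev: "\<And>i. i < n \<Longrightarrow> (\<Sum>j<n. complex_of_real (Qn d n lam i j) * v j)
                                = \<mu> * v i + (x + y * \<zeta> i + z * cnj (\<zeta> i))"
    and "v 0 = 0" "v 1 = 0" "v 2 = 0" and "k < n" "v k \<noteq> 0"
  shows "cmod \<mu> < lam"
proof -
  obtain i0 where i0: "i0 < n" "perp v i0 \<noteq> 0"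
    using perp_nonzero[OF assms(2-6)] by blast
  define N where "N = (\<Sum>i<n. (cmod (perp v i))\<^sup>2)"
  define A where "A = (\<Sum>i<n. alpha d n (int i) * (cmod (perp v i))\<^sup>2)"
  have "\<mu> * of_real N = of_real (lam * N - 2 * lam * real n * A)"
    unfolding N_def A_def using perp_eigen_equation[OF ev] by (rule perp_rayleigh_identity)
  moreover have "0 < real n * A" "real n * A < N"
    unfolding A_def N_def using n_alpha_weighted_sum_bounds[of i0 "perp v", OF i0] by simp_all
  ultimately have \<mu>: "\<mu> = of_real (lam * (1 - 2 * (real n * A / N)))"
    and "\<bar>1 - 2 * (real n * A / N)\<bar> < 1"
    by (simp_all add: field_simps abs_less_iff)
  thus ?thesis unfolding \<mu> norm_of_real using lam_gt by (simp add: abs_mult)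
qed

definition Qm :: "complex mat" where
  "Qm = mat n n (\<lambda>(i, j). complex_of_real (Qn d n lam i j))"

text \<open>The columns \<open>1\<close>, \<open>\<zeta>\<close>, \<open>cnj \<circ> \<zeta>\<close>, followed by the unit vectors \<open>e\<^sub>3, \<dots>, e\<^sub>n\<^sub>-\<^sub>1\<close>: a basis
  adapted to the \<open>Q\<^sub>n\<close>-invariant subspace spanned by the first three.\<close>
definition Tm :: "complex mat" where
  "Tm = mat n n (\<lambda>(i, j). if j = 0 then 1 else if j = 1 then \<zeta> i else if j = 2 then cnj (\<zeta> i)
                          else if i = j then 1 else 0)"

lemma Qm_carrier: "Qm \<in> carrier_mat n n" and Tm_carrier: "Tm \<in> carrier_mat n n"
  unfolding Qm_def Tm_def by simp_all

lemma Qm_mult_vec: "v \<in> carrier_vec n \<Longrightarrow> i < n \<Longrightarrow> (Qm *\<^sub>v v) $ i = (\<Sum>j<n. complex_of_real (Qn d n lam i j) * v $ j)"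
  unfolding Qm_def by (simp add: scalar_prod_def lessThan_atLeast0)

lemma Tm_mult_vec:
  assumes "v \<in> carrier_vec n" "i < n"
  shows "(Tm *\<^sub>v v) $ i = v $ 0 + \<zeta> i * v $ 1 + cnj (\<zeta> i) * v $ 2 + (if 3 \<le> i then v $ i else 0)"
proof -
  have "(Tm *\<^sub>v v) $ i = (\<Sum>j<n. Tm $$ (i, j) * v $ j)"
    using assms Tm_carrier by (simp add: scalar_prod_def lessThan_atLeast0)
  also have "\<dots> = (\<Sum>j<n. (if j = 0 then v $ 0 else 0) + (if j = 1 then \<zeta> i * v $ 1 else 0)
                   + (if j = 2 then cnj (\<zeta> i) * v $ 2 else 0) + (if 3 \<le> i \<and> j = i then v $ i else 0))"
    using assms by (intro sum.cong) (auto simp: Tm_def)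
  also have "\<dots> = v $ 0 + \<zeta> i * v $ 1 + cnj (\<zeta> i) * v $ 2 + (if 3 \<le> i then v $ i else 0)"
    using n_ge_3 assms by (simp add: sum.distrib)
  finally show ?thesis .
qed

lemma det_Tm_nonzero: "det Tm \<noteq> 0"
proof
  assume "det Tm = 0"
  then obtain v where v: "v \<in> carrier_vec n" "v \<noteq> 0\<^sub>v n" "Tm *\<^sub>v v = 0\<^sub>v n"
    using det_0_iff_vec_prod_zero[OF Tm_carrier] by blast
  have Tv0: "v $ 0 + \<zeta> i * v $ 1 + cnj (\<zeta> i) * v $ 2 + (if 3 \<le> i then v $ i else 0) = 0" if "i < n" for i
    using v(3) Tm_mult_vec[OF v(1) that] that by (metis index_zero_vec(1))
  have v012: "v $ 0 = 0 \<and> v $ 1 = 0 \<and> v $ 2 = 0"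
  proof (rule zeta_span_eq_0)
    fix i :: nat assume "i < 3"
    thus "v $ 0 + v $ 1 * \<zeta> i + v $ 2 * cnj (\<zeta> i) = 0"
      using Tv0[of i] n_ge_3 by (simp add: mult.commute)
  qed
  have "v $ i = 0" if "i < n" for i
  proof (cases "3 \<le> i")
    case True
    with Tv0[OF that] v012 show ?thesis by simp
  next
    case False
    hence "i = 0 \<or> i = 1 \<or> i = 2" by auto
    with v012 show ?thesis by auto
  qed
  hence "v = 0\<^sub>v n" using v(1) by (intro eq_vecI) auto
  with v(2) show False ..
qed

definition Tinv :: "complex mat" where
  "Tinv = (1 / det Tm) \<cdot>\<^sub>m adj_mat Tm"

lemmas Tinv_inverse = adj_mat_inverse[OF Tm_carrier det_Tm_nonzero, folded Tinv_def]

definition Mm :: "complex mat" where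
  "Mm = Tinv * Qm * Tm"

lemma Mm_carrier: "Mm \<in> carrier_mat n n"
  unfolding Mm_def using Tinv_inverse Qm_carrier Tm_carrier by auto

lemma Qm_Tm: "Qm * Tm = Tm * Mm"
proof -
  have QT: "Qm * Tm \<in> carrier_mat n n" using Qm_carrier Tm_carrier by simp
  have "Tm * Mm = Tm * (Tinv * (Qm * Tm))"
    unfolding Mm_def using Tinv_inverse Qm_carrier Tm_carrier by (simp add: assoc_mult_mat[of _ n n _ n _ n])
  also have "\<dots> = (Tm * Tinv) * (Qm * Tm)"
    by (rule assoc_mult_mat[symmetric, OF Tm_carrier Tinv_inverse(1) QT])
  finally show ?thesis using Tinv_inverse left_mult_one_mat[OF QT] by simp
qed

lemma similar_Qm_Mm: "similar_mat Qm Mm"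
  using Qm_Tm Tinv_inverse Qm_carrier Tm_carrier Mm_carrier
  by (intro similar_matI[of Qm Mm Tm Tinv n]) (auto simp: Mm_def assoc_mult_mat[of _ n n _ n _ n])

lemma dim_Tm [simp]: "dim_row Tm = n" "dim_col Tm = n"
  and dim_Qm [simp]: "dim_row Qm = n" "dim_col Qm = n"
  and dim_Mm [simp]: "dim_row Mm = n" "dim_col Mm = n"
  using Mm_carrier unfolding Tm_def Qm_def carrier_mat_def by simp_all

text \<open>Coordinates of \<open>Q\<^sub>n 1 = 1\<close>, \<open>Q\<^sub>n \<zeta>\<close> and \<open>Q\<^sub>n (cnj \<circ> \<zeta>)\<close> in the basis \<open>Tm\<close>: the latter two
  are \<open>\<lambda> \<zeta>\<close> and \<open>\<lambda> (cnj \<circ> \<zeta>)\<close> plus multiples of \<open>1\<close>.\<close>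
definition Mm_col :: "nat \<Rightarrow> complex vec" where
  "Mm_col j = vec n (\<lambda>i. if i = j then (if j = 0 then 1 else of_real lam)
                        else if i = 0 \<and> j = 1 then (1 - lam) * pairing beta_c \<zeta>
                        else if i = 0 \<and> j = 2 then (1 - lam) * pairing beta_c (\<lambda>k. cnj (\<zeta> k))
                        else 0)"

lemma Qm_mult_col_Tm:
  assumes "j < 3"
  shows "Qm *\<^sub>v col Tm j = Tm *\<^sub>v Mm_col j"
proof (rule eq_vecI)
  fix i assume "i < dim_vec (Tm *\<^sub>v Mm_col j)"
  hence i: "i < n" by simp
  have col: "col Tm j \<in> carrier_vec n" "Mm_col j \<in> carrier_vec n"
    unfolding Mm_col_def carrier_vec_def by simp_all
  have Tm_col: "col Tm j $ k = (if j = 0 then 1 else if j = 1 then \<zeta> k else cnj (\<zeta> k))" if "k < n" for k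
    using that assms n_ge_3 by (auto simp: Tm_def)
  have "(Qm *\<^sub>v col Tm j) $ i = (\<Sum>k<n. complex_of_real (Qn d n lam i k)
                                   * (if j = 0 then 1 else if j = 1 then \<zeta> k else cnj (\<zeta> k)))"
    unfolding Qm_mult_vec[OF col(1) i] using Tm_col by (intro sum.cong) auto
  also have "\<dots> = (Tm *\<^sub>v Mm_col j) $ i"
  proof -
    note Tm_Mm_col = Tm_mult_vec[OF col(2) i]
    consider "j = 0" | "j = 1" | "j = 2" using assms by linarith
    thus ?thesis
    proof cases
      case 1
      hence "(Tm *\<^sub>v Mm_col j) $ i = 1"
        using i n_ge_3 unfolding Tm_Mm_col by (simp add: Mm_col_def)
      thus ?thesis using 1 Qn_mult_const[OF i] by simp
    next
      case 2
      hence "(Tm *\<^sub>v Mm_col j) $ i = lam * \<zeta> i + (1 - lam) * pairing beta_c \<zeta>"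
        using i n_ge_3 unfolding Tm_Mm_col by (simp add: Mm_col_def mult.commute)
      thus ?thesis using 2 Qn_mult_zeta[OF i] by simp
    next
      case 3
      hence "(Tm *\<^sub>v Mm_col j) $ i = lam * cnj (\<zeta> i) + (1 - lam) * pairing beta_c (\<lambda>k. cnj (\<zeta> k))"
        using i n_ge_3 unfolding Tm_Mm_col by (simp add: Mm_col_def mult.commute)
      thus ?thesis using 3 Qn_mult_cnj_zeta[OF i] by simp
    qed
  qed
  finally show "(Qm *\<^sub>v col Tm j) $ i = (Tm *\<^sub>v Mm_col j) $ i" .
qed (use Qm_carrier Tm_carrier in simp)

lemma Mm_first_cols:
  assumes "j < 3" "i < n"
  shows "Mm $$ (i, j) = Mm_col j $ i"
proof -
  have jn: "j < n" using assms n_ge_3 by simp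
  have carr: "Mm_col j \<in> carrier_vec n" unfolding Mm_col_def by simp
  have QT: "Qm * Tm \<in> carrier_mat n n" using Qm_carrier Tm_carrier by simp
  have "col Mm j = col (Tinv * (Qm * Tm)) j"
    unfolding Mm_def using Tinv_inverse(1) Qm_carrier Tm_carrier by (simp add: assoc_mult_mat[of _ n n _ n _ n])
  also have "\<dots> = Tinv *\<^sub>v (Qm *\<^sub>v col Tm j)"
    unfolding col_mult2[OF Tinv_inverse(1) QT jn] col_mult2[OF Qm_carrier Tm_carrier jn] ..
  also have "\<dots> = (Tinv * Tm) *\<^sub>v Mm_col j"
    unfolding Qm_mult_col_Tm[OF assms(1)] by (rule assoc_mult_mat_vec[symmetric, OF Tinv_inverse(1) Tm_carrier carr])
  finally have "col Mm j = Mm_col j" using Tinv_inverse(3) carr by simp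
  thus ?thesis using assms jn Mm_carrier by (metis carrier_matD index_col)
qed

definition Am :: "complex mat" where "Am = mat 3 3 (\<lambda>(i, j). Mm $$ (i, j))"
definition Bm :: "complex mat" where "Bm = mat 3 (n - 3) (\<lambda>(i, j). Mm $$ (i, j + 3))"
definition Dm :: "complex mat" where "Dm = mat (n - 3) (n - 3) (\<lambda>(i, j). Mm $$ (i + 3, j + 3))"

lemma Am_carrier: "Am \<in> carrier_mat 3 3" and Bm_carrier: "Bm \<in> carrier_mat 3 (n - 3)"
  and Dm_carrier: "Dm \<in> carrier_mat (n - 3) (n - 3)"
  unfolding Am_def Bm_def Dm_def by simp_all

lemma dim_blocks [simp]: "dim_row Am = 3" "dim_col Am = 3" "dim_row Bm = 3" "dim_col Bm = n - 3"
  "dim_row Dm = n - 3" "dim_col Dm = n - 3"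
  unfolding Am_def Bm_def Dm_def by simp_all

lemma Mm_block: "Mm = four_block_mat Am Bm (0\<^sub>m (n - 3) 3) Dm"
proof (rule eq_matI)
  fix i j assume "i < dim_row (four_block_mat Am Bm (0\<^sub>m (n - 3) 3) Dm)"
    "j < dim_col (four_block_mat Am Bm (0\<^sub>m (n - 3) 3) Dm)"
  hence "i < n" "j < n" using n_ge_3 by simp_all
  show "Mm $$ (i, j) = four_block_mat Am Bm (0\<^sub>m (n - 3) 3) Dm $$ (i, j)"
  proof (cases "i < 3 \<or> 3 \<le> j")
    case True
    thus ?thesis using \<open>i < n\<close> \<open>j < n\<close> by (auto simp: Am_def Bm_def Dm_def)
  next
    case False
    hence "3 \<le> i" "j < 3" by auto
    thus ?thesis using \<open>i < n\<close> Mm_first_cols[of j i] by (simp add: Mm_col_def Am_def Dm_def)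
  qed
qed (use n_ge_3 in simp_all)

lemma char_poly_Am: "char_poly Am = [:-1, 1:] * [:- of_real lam, 1:] ^ 2"
proof -
  have Am: "Am $$ (i, j) = Mm_col j $ i" if "i < 3" "j < 3" for i j
    using that n_ge_3 Mm_first_cols[of j i] by (simp add: Am_def)
  have "upper_triangular Am"
    unfolding upper_triangular_def using n_ge_3 by (auto simp: Am Mm_col_def)
  moreover have "diag_mat Am = [1, of_real lam, of_real lam]"
    using n_ge_3 by (simp add: diag_mat_def upt_rec Am Mm_col_def)
  ultimately show ?thesis
    using char_poly_upper_triangular[OF Am_carrier] by (simp add: power2_eq_square)
qed

lemma char_poly_Qm: "char_poly Qm = [:-1, 1:] * [:- of_real lam, 1:] ^ 2 * char_poly Dm"
proof -
  have "char_poly Qm = char_poly Mm" by (rule char_poly_similar[OF similar_Qm_Mm])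
  also have "\<dots> = char_poly Am * char_poly Dm"
    unfolding Mm_block by (rule char_poly_four_block_mat_lower_left_zero[OF Am_carrier Bm_carrier Dm_carrier])
  finally show ?thesis unfolding char_poly_Am .
qed

lemma index_padded_vec:
  assumes "u \<in> carrier_vec (n - 3)" "i < n"
  shows "(0\<^sub>v 3 @\<^sub>v u) $ i = (if i < 3 then 0 else u $ (i - 3))"
  using assms n_ge_3 by (subst index_append_vec) (auto dest: carrier_vecD)

lemma Qm_mult_padded_eigenvector:
  assumes u: "u \<in> carrier_vec (n - 3)" "Dm *\<^sub>v u = \<mu> \<cdot>\<^sub>v u"
  obtains x y z where "\<And>i. i < n \<Longrightarrow> (\<Sum>j<n. complex_of_real (Qn d n lam i j) * (0\<^sub>v 3 @\<^sub>v u) $ j)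
                                   = \<mu> * (0\<^sub>v 3 @\<^sub>v u) $ i + (x + y * \<zeta> i + z * cnj (\<zeta> i))"
proof -
  define v where "v = 0\<^sub>v 3 @\<^sub>v u"
  have du: "dim_vec u = n - 3" using u(1) by (rule carrier_vecD)
  have v: "v \<in> carrier_vec n" unfolding v_def carrier_vec_def using du n_ge_3 by simp
  note v_idx = index_padded_vec[OF u(1), folded v_def]
  define w where "w = Mm *\<^sub>v v"
  have w: "w \<in> carrier_vec n" unfolding w_def carrier_vec_def by simp
  have w_idx: "w $ i = \<mu> * v $ i" if "3 \<le> i" "i < n" for i
  proof -
    have "w = (Am *\<^sub>v 0\<^sub>v 3 + Bm *\<^sub>v u) @\<^sub>v (0\<^sub>m (n - 3) 3 *\<^sub>v 0\<^sub>v 3 + Dm *\<^sub>v u)"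
      unfolding w_def v_def Mm_block
      by (rule four_block_mat_mult_vec[OF Am_carrier Bm_carrier zero_carrier_mat Dm_carrier zero_carrier_vec u(1)])
    thus ?thesis using that du u(2) v_idx by simp
  qed
  have "Tm *\<^sub>v v = v"
  proof (rule eq_vecI)
    fix i assume "i < dim_vec v"
    hence i: "i < n" using v by (simp only: carrier_vecD)
    show "(Tm *\<^sub>v v) $ i = v $ i" unfolding Tm_mult_vec[OF v i] using v_idx i n_ge_3 by simp
  qed (use v in \<open>simp only: carrier_vecD dim_mult_mat_vec dim_Tm\<close>)
  hence "Qm *\<^sub>v v = (Qm * Tm) *\<^sub>v v"
    using assoc_mult_mat_vec[OF Qm_carrier Tm_carrier v] by simp
  also have "\<dots> = Tm *\<^sub>v w"
    unfolding Qm_Tm w_def by (rule assoc_mult_mat_vec[OF Tm_carrier Mm_carrier v])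
  finally have Qv: "Qm *\<^sub>v v = Tm *\<^sub>v w" .
  have "(\<Sum>j<n. complex_of_real (Qn d n lam i j) * v $ j)
      = \<mu> * v $ i + (w $ 0 + w $ 1 * \<zeta> i + w $ 2 * cnj (\<zeta> i))" if "i < n" for i
  proof -
    have "(\<Sum>j<n. complex_of_real (Qn d n lam i j) * v $ j)
        = w $ 0 + \<zeta> i * w $ 1 + cnj (\<zeta> i) * w $ 2 + (if 3 \<le> i then w $ i else 0)"
      unfolding Qm_mult_vec[OF v that, symmetric] Qv by (rule Tm_mult_vec[OF w that])
    moreover have "(if 3 \<le> i then w $ i else 0) = \<mu> * v $ i"
      using w_idx[OF _ that] v_idx[OF that] by simp
    ultimately show ?thesis by (simp add: algebra_simps)
  qed
  thus ?thesis using that unfolding v_def by blast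
qed

lemma Dm_root_bound:
  assumes "poly (char_poly Dm) \<mu> = 0"
  shows "cmod \<mu> < lam"
proof -
  obtain u where u: "u \<in> carrier_vec (n - 3)" "u \<noteq> 0\<^sub>v (n - 3)" "Dm *\<^sub>v u = \<mu> \<cdot>\<^sub>v u"
    using eigenvalue_root_char_poly[OF Dm_carrier] assms Dm_carrier
    unfolding eigenvalue_def eigenvector_def by auto
  obtain x y z where ev: "\<And>i. i < n \<Longrightarrow> (\<Sum>j<n. complex_of_real (Qn d n lam i j) * (0\<^sub>v 3 @\<^sub>v u) $ j)
                                   = \<mu> * (0\<^sub>v 3 @\<^sub>v u) $ i + (x + y * \<zeta> i + z * cnj (\<zeta> i))"
    using Qm_mult_padded_eigenvector[OF u(1,3)] by blast
  obtain k where "k < n - 3" "u $ k \<noteq> 0"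
    using u(1,2) by (metis carrier_vecD eq_vecI index_zero_vec)
  moreover note index_padded_vec[OF u(1)]
  ultimately show ?thesis
    using n_ge_3 by (intro eigenvalue_modulo_span_bound[OF ev, of "k + 3"]) auto
qed

abbreviation unit_fun :: "nat \<Rightarrow> nat \<Rightarrow> real" where
  "unit_fun c \<equiv> (\<lambda>k. if k = c then 1 else 0)"

definition Sm :: "complex mat" where
  "Sm = map_mat complex_of_real (Sn d n lam)"

lemma Sm_entry: "r < 4 * n \<Longrightarrow> c < 4 * n \<Longrightarrow> Sm $$ (r, c) = complex_of_real (subdiv_map d n lam (unit_fun c) r)"
  unfolding Sm_def Sn_def by simp

lemma dim_Sm [simp]: "dim_row Sm = 4 * n" "dim_col Sm = 4 * n"
  unfolding Sm_def Sn_def by simp_all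

lemma subdiv_map_unit_first_rows:
  assumes "r < n"
  shows "subdiv_map d n lam (unit_fun c) r = (if c < n then Qn d n lam r c else 0)"
proof -
  have "subdiv_map d n lam (unit_fun c) r = (\<Sum>i<n. Qn d n lam r i * (if i = c then 1 else 0))"
    unfolding subdiv_map_def Let_def comp_def using assms by simp
  thus ?thesis by (simp add: if_distrib[of "\<lambda>x. _ * x"] sum.delta' cong: if_cong)
qed

definition Rm :: "complex mat" where "Rm = mat (3 * n) (3 * n) (\<lambda>(i, j). Sm $$ (i + n, j + n))"
definition Cm :: "complex mat" where "Cm = mat (3 * n) n (\<lambda>(i, j). Sm $$ (i + n, j))"

lemma Rm_carrier: "Rm \<in> carrier_mat (3 * n) (3 * n)" and Cm_carrier: "Cm \<in> carrier_mat (3 * n) n"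
  unfolding Rm_def Cm_def by simp_all

lemma Sm_block: "Sm = four_block_mat Qm (0\<^sub>m n (3 * n)) Cm Rm"
proof (rule eq_matI)
  fix i j assume "i < dim_row (four_block_mat Qm (0\<^sub>m n (3 * n)) Cm Rm)"
    "j < dim_col (four_block_mat Qm (0\<^sub>m n (3 * n)) Cm Rm)"
  hence ij: "i < 4 * n" "j < 4 * n" by (simp_all add: Rm_def)
  show "Sm $$ (i, j) = four_block_mat Qm (0\<^sub>m n (3 * n)) Cm Rm $$ (i, j)"
  proof (cases "i < n")
    case True
    thus ?thesis using ij by (simp add: Sm_entry subdiv_map_unit_first_rows Qm_def Rm_def Cm_def)
  next
    case False
    thus ?thesis using ij by (simp add: Rm_def Cm_def)
  qed
qed (simp_all add: Rm_def)

lemma char_poly_Sm: "char_poly Sm = char_poly Qm * char_poly Rm"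
  unfolding Sm_block by (rule char_poly_four_block_mat_upper_right_zero[OF Qm_carrier Cm_carrier Rm_carrier])

lemma Rm_mult_vec:
  assumes "w \<in> carrier_vec (3 * n)" "i < 3 * n"
  shows "(Rm *\<^sub>v w) $ i = (\<Sum>j<3 * n. complex_of_real (subdiv_map d n lam (unit_fun (j + n)) (i + n)) * w $ j)"
  using assms by (simp add: Rm_def scalar_prod_def lessThan_atLeast0 Sm_entry)

text \<open>Coordinates \<open>i\<close>, \<open>n + i\<close>, \<open>2 n + i\<close> of \<open>Rm\<close> are P^{1,0}_i, P^{0,1}_i, P^{1,1}_i.\<close>
lemma Rm_mult_vec_rows:
  assumes "w \<in> carrier_vec (3 * n)" "i < n"
  defines "jm \<equiv> nat ((int i - 1) mod int n)" and "jp \<equiv> nat ((int i + 1) mod int n)"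
  shows "(Rm *\<^sub>v w) $ i = (complex_of_real (2 * D (int i - 1) + D (int i + 1)) * w $ i
                             + complex_of_real (D (int i + 1)) * w $ (n + jm))
                            / complex_of_real (8 * (D (int i - 1) + D (int i + 1)))"
    and "(Rm *\<^sub>v w) $ (n + i) = (complex_of_real (D (int i)) * w $ jp
                             + complex_of_real (D (int i) + 2 * D (int i + 2)) * w $ (n + i))
                            / complex_of_real (8 * (D (int i) + D (int i + 2)))"
    and "(Rm *\<^sub>v w) $ (2 * n + i) = 3/16 * w $ i + 3/16 * w $ (n + i) + 1/16 * w $ (2 * n + i)"
proof -
  have rows: "i < 3 * n" "n + i < 3 * n" "2 * n + i < 3 * n" using assms(2) by simp_all
  note R = Rm_mult_vec[OF assms(1) rows(1)] Rm_mult_vec[OF assms(1) rows(2)] Rm_mult_vec[OF assms(1) rows(3)]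
  have "jm < n" "jp < n" unfolding jm_def jp_def using n_pos by (simp_all add: nat_less_iff)
  note row_simps = subdiv_map_def Let_def comp_def if_distrib[of complex_of_real] sum_divide_distrib[symmetric]
    distrib_right sum.distrib mult.assoc if_distrib[of "\<lambda>x. x * _"] if_distrib[of "\<lambda>x. _ * x"] sum.delta
  show "(Rm *\<^sub>v w) $ i = (complex_of_real (2 * D (int i - 1) + D (int i + 1)) * w $ i
                             + complex_of_real (D (int i + 1)) * w $ (n + jm))
                            / complex_of_real (8 * (D (int i - 1) + D (int i + 1)))"
    unfolding R using assms(2) \<open>jm < n\<close>
    by (simp add: row_simps jm_def cong: if_cong)
  show "(Rm *\<^sub>v w) $ (n + i) = (complex_of_real (D (int i)) * w $ jp
                             + complex_of_real (D (int i) + 2 * D (int i + 2)) * w $ (n + i))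
                            / complex_of_real (8 * (D (int i) + D (int i + 2)))"
  proof -
    have "n + i + n = 2 * n + i" by simp
    thus ?thesis unfolding R using assms(2) \<open>jp < n\<close>
      by (simp add: row_simps jp_def cong: if_cong) (simp add: add.commute)
  qed
  have "2 * n + i + n = 3 * n + i" by simp
  thus "(Rm *\<^sub>v w) $ (2 * n + i) = 3/16 * w $ i + 3/16 * w $ (n + i) + 1/16 * w $ (2 * n + i)"
    unfolding R using assms(2)
    by (simp add: row_simps cong: if_cong)
qed

lemma Rm_eigenvector_edge_pair:
  assumes w: "w \<in> carrier_vec (3 * n)" "Rm *\<^sub>v w = \<mu> \<cdot>\<^sub>v w"
    and "\<mu> \<noteq> 1/4" "\<mu> \<noteq> 1/8" and i: "i < n"
  shows "w $ nat ((int i + 1) mod int n) = 0 \<and> w $ (n + i) = 0"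
proof -
  have ev: "(Rm *\<^sub>v w) $ k = \<mu> * w $ k" if "k < 3 * n" for k
    using w that by (metis carrier_vecD index_smult_vec(1))
  define jp where "jp = nat ((int i + 1) mod int n)"
  have jp: "jp < n" "int jp = (int i + 1) mod int n"
    unfolding jp_def using n_pos by (simp_all add: nat_less_iff)
  have D_jp: "D (int jp - 1) = D (int i)" "D (int jp + 1) = D (int i + 2)"
    unfolding jp(2) by (metis dm_mod mod_diff_left_eq add_diff_cancel_right',
                        metis dm_mod mod_add_left_eq add.assoc one_add_one)
  have jm_jp: "nat ((int jp - 1) mod int n) = i"
    using i unfolding jp(2) by (simp add: mod_diff_left_eq)
  have "\<mu> * w $ jp = (of_real (2 * D (int i) + D (int i + 2)) * w $ jp + of_real (D (int i + 2)) * w $ (n + i))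
                      / of_real (8 * (D (int i) + D (int i + 2)))"
    using ev[of jp] jp(1) Rm_mult_vec_rows(1)[OF w(1) jp(1)] unfolding D_jp jm_jp by simp
  moreover have "\<mu> * w $ (n + i) = (of_real (D (int i)) * w $ jp + of_real (D (int i) + 2 * D (int i + 2)) * w $ (n + i))
                      / of_real (8 * (D (int i) + D (int i + 2)))"
    using ev[of "n + i"] i Rm_mult_vec_rows(2)[OF w(1) i] unfolding jp_def by simp
  ultimately show ?thesis
    unfolding jp_def[symmetric] using assms(3,4) by (intro edge_pair_eigenvector_eq_0[OF dm_pos dm_pos])
qed

lemma Rm_roots:
  assumes "poly (char_poly Rm) \<mu> = 0"
  shows "\<mu> = 1/4 \<or> \<mu> = 1/8 \<or> \<mu> = 1/16"
proof (rule ccontr)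
  assume \<mu>: "\<not> (\<mu> = 1/4 \<or> \<mu> = 1/8 \<or> \<mu> = 1/16)"
  obtain w where w: "w \<in> carrier_vec (3 * n)" "w \<noteq> 0\<^sub>v (3 * n)" "Rm *\<^sub>v w = \<mu> \<cdot>\<^sub>v w"
    using eigenvalue_root_char_poly[OF Rm_carrier] assms Rm_carrier
    unfolding eigenvalue_def eigenvector_def by auto
  have dw: "dim_vec w = 3 * n" using w(1) by (rule carrier_vecD)
  have pair: "w $ nat ((int i + 1) mod int n) = 0 \<and> w $ (n + i) = 0" if "i < n" for i
    using Rm_eigenvector_edge_pair[OF w(1,3) _ _ that] \<mu> by blast
  have P10: "w $ j = 0" if "j < n" for j
  proof -
    define i where "i = nat ((int j - 1) mod int n)"
    have "i < n" "nat ((int i + 1) mod int n) = j"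
      unfolding i_def using n_pos that by (simp_all add: nat_less_iff mod_add_left_eq)
    thus ?thesis using pair by metis
  qed
  have P11: "w $ (2 * n + i) = 0" if "i < n" for i
  proof -
    have "(Rm *\<^sub>v w) $ (2 * n + i) = \<mu> * w $ (2 * n + i)"
      unfolding w(3) using dw that by simp
    hence "\<mu> * w $ (2 * n + i) = 1/16 * w $ (2 * n + i)"
      using Rm_mult_vec_rows(3)[OF w(1) that] P10[OF that] pair[OF that] by simp
    thus ?thesis using \<mu> by auto
  qed
  have "w $ k = 0" if "k < 3 * n" for k
  proof -
    consider "k < n" | "n \<le> k" "k < 2 * n" | "2 * n \<le> k" by linarith
    thus ?thesis
    proof cases
      case 2
      hence "k = n + (k - n)" "k - n < n" by simp_all
      thus ?thesis using pair[of "k - n"] by simp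
    next
      case 3
      hence "k = 2 * n + (k - 2 * n)" "k - 2 * n < n" using that by simp_all
      thus ?thesis using P11[of "k - 2 * n"] by simp
    qed (use P10 in blast)
  qed
  hence "w = 0\<^sub>v (3 * n)" using dw by (intro eq_vecI) auto
  with w(2) show False ..
qed

lemma roots_Dm_Rm_bound:
  assumes "poly (char_poly Dm * char_poly Rm) \<mu> = 0"
  shows "cmod \<mu> < lam"
proof -
  have "cmod \<mu> \<le> 1/4" if "\<mu> = 1/4 \<or> \<mu> = 1/8 \<or> \<mu> = 1/16"
    using that by (elim disjE; hypsubst; simp add: norm_divide)
  thus ?thesis using assms Dm_root_bound Rm_roots lam_gt by fastforce
qed

end

theorem lemma2:
  fixes n :: nat and d :: "nat \<Rightarrow> real" and lam :: real
  assumes "n \<ge> 3"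
    and "\<And>j. j < n \<Longrightarrow> d j > 0"
    and "1/4 < lam" and "lam < 1"
  shows "order 1 (char_poly (map_mat complex_of_real (Sn d n lam))) = 1
       \<and> order (complex_of_real lam) (char_poly (map_mat complex_of_real (Sn d n lam))) = 2
       \<and> (\<forall>\<mu>. poly (char_poly (map_mat complex_of_real (Sn d n lam))) \<mu> = 0
              \<longrightarrow> \<mu> \<noteq> 1 \<longrightarrow> \<mu> \<noteq> complex_of_real lam \<longrightarrow> cmod \<mu> < lam)"
proof -
  interpret tuned_subdivision n d lam
    using assms by unfold_locales auto
  let ?q = "char_poly Dm * char_poly Rm"
  have factored: "char_poly (map_mat complex_of_real (Sn d n lam)) = [:-1, 1:] * [:- of_real lam, 1:] ^ 2 * ?q"
    unfolding Sm_def[symmetric] char_poly_Sm char_poly_Qm by (simp add: mult.assoc)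
  have neq: "1 \<noteq> complex_of_real lam" using \<open>lam < 1\<close> by simp
  have q: "poly ?q 1 \<noteq> 0" "poly ?q (of_real lam) \<noteq> 0"
    using roots_Dm_Rm_bound[of 1] roots_Dm_Rm_bound[of "of_real lam"] \<open>lam < 1\<close> by auto
  have "order 1 (char_poly (map_mat complex_of_real (Sn d n lam))) = 1"
    "order (complex_of_real lam) (char_poly (map_mat complex_of_real (Sn d n lam))) = 2"
    unfolding factored by (rule order_of_factored_poly[OF neq q])+
  moreover have "cmod \<mu> < lam" if "poly (char_poly (map_mat complex_of_real (Sn d n lam))) \<mu> = 0"
    "\<mu> \<noteq> 1" "\<mu> \<noteq> complex_of_real lam" for \<mu>
    using that roots_Dm_Rm_bound unfolding factored by auto
  ultimately show ?thesis by blast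
qed

end
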